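(* Let $K$ be an algebraically closed field of characteristic $2$ and let $X=\{a_1\sigma_1^4+a_2\sigma_1^2\sigma_2+a_3\sigma_1\sigma_3+a_4\sigma_4+\beta\sigma_2^2=0\}\subset\mathbb{P}^3_K$ be a normal symmetric quartic. Then no singular point of $X$ has four pairwise distinct coordinates. Moreover, up to permutation of coordinates: - $(0,0,1,1)\in\mathrm{Sing}(X)$ iff $\beta=0$; - $(0,0,0,1)\in\mathrm{Sing}(X)$ iff $a_1=a_2=0$; - for $b\neq1$: $(1,1,1,b)\in\mathrm{Sing}(X)$ iff $a_4=a_2(1+b)^2$ and $\beta=a_1(1+b)^2+a_2+a_3$; - $(1,1,1,1)\in\mathrm{Sing}(X)$ iff $a_4=0$; - for $b\neq0,1$: $(0,0,1,b)\in\mathrm{Sing}(X)$ iff $a_2=a_3=0$ and $a_1(1+b)^4+\beta b^2=0$; - for $z\neq0,1$: $(0,1,1,z)\in\mathrm{Sing}(X)$ iff $a_3=za_2$, $a_4=z^2a_2$ and $\beta=a_1z^4+a_2z^2(1+z)$; - for $b,c\notin\{0,1\}$ with $b\neq c$, setting $z=b+c$: $(1,1,b,c)\in\mathrm{Sing}(X)$ iff $a_3=za_2$, $a_4=z^2a_2$ and $\beta(1+bc)^2+a_1z^4+a_2z^2(1+z)=0$. *)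

theory Defs
  imports "HOL-Computational_Algebra.Polynomial"
begin

definition alg_closed :: "'a::field itself \<Rightarrow> bool" where
  "alg_closed _ \<longleftrightarrow> (\<forall>p::'a poly. 0 < degree p \<longrightarrow> (\<exists>x. poly p x = 0))"

definition esym4 :: "nat \<Rightarrow> (nat \<Rightarrow> 'b::comm_ring_1) \<Rightarrow> 'b" where
  "esym4 k y = (\<Sum>S\<in>{S. S \<subseteq> {0..<4} \<and> card S = k}. \<Prod>j\<in>S. y j)"

definition symq :: "('a \<Rightarrow> 'b::comm_ring_1) \<Rightarrow> 'a \<Rightarrow> 'a \<Rightarrow> 'a \<Rightarrow> 'a \<Rightarrow> 'a \<Rightarrow> (nat \<Rightarrow> 'b) \<Rightarrow> 'b" where
  "symq c a1 a2 a3 a4 \<beta> y =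
     c a1 * esym4 1 y ^ 4 + c a2 * esym4 1 y ^ 2 * esym4 2 y + c a3 * esym4 1 y * esym4 3 y
     + c a4 * esym4 4 y + c \<beta> * esym4 2 y ^ 2"

definition F :: "'a::field \<Rightarrow> 'a \<Rightarrow> 'a \<Rightarrow> 'a \<Rightarrow> 'a \<Rightarrow> (nat \<Rightarrow> 'a) \<Rightarrow> 'a" where
  "F a1 a2 a3 a4 \<beta> x = symq id a1 a2 a3 a4 \<beta> x"

text \<open>Partial derivative dF/dx_i at x: view F as a univariate polynomial in the i-th variable
  (others fixed to the coordinates of x), take the formal derivative, evaluate at x i.\<close>
definition dF :: "'a::field \<Rightarrow> 'a \<Rightarrow> 'a \<Rightarrow> 'a \<Rightarrow> 'a \<Rightarrow> nat \<Rightarrow> (nat \<Rightarrow> 'a) \<Rightarrow> 'a" where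
  "dF a1 a2 a3 a4 \<beta> i x =
     poly (pderiv (symq (\<lambda>t. [:t:]) a1 a2 a3 a4 \<beta> (\<lambda>j. if j = i then [:0, 1:] else [:x j:]))) (x i)"

definition sing_pt :: "'a::field \<Rightarrow> 'a \<Rightarrow> 'a \<Rightarrow> 'a \<Rightarrow> 'a \<Rightarrow> (nat \<Rightarrow> 'a) \<Rightarrow> bool" where
  "sing_pt a1 a2 a3 a4 \<beta> x \<longleftrightarrow> (\<exists>i<4. x i \<noteq> 0) \<and> F a1 a2 a3 a4 \<beta> x = 0 \<and>
     (\<forall>i<4. dF a1 a2 a3 a4 \<beta> i x = 0)"

text \<open>Normality of the quartic surface X = {F = 0} in P^3 (hypersurface: normal iff
  F is nonzero with only finitely many singular points, by Serre's criterion):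
  the singular locus consists of finitely many projective points.\<close>
definition normal_quartic :: "'a::field \<Rightarrow> 'a \<Rightarrow> 'a \<Rightarrow> 'a \<Rightarrow> 'a \<Rightarrow> bool" where
  "normal_quartic a1 a2 a3 a4 \<beta> \<longleftrightarrow>
     (\<exists>x. (\<exists>i<4. x i \<noteq> 0) \<and> F a1 a2 a3 a4 \<beta> x \<noteq> 0) \<and>
     (\<exists>P. finite P \<and> (\<forall>x. sing_pt a1 a2 a3 a4 \<beta> x \<longrightarrow>
        (\<exists>p\<in>P. \<exists>t::'a. \<forall>i<4. x i = t * p i)))"

definition pt :: "'a \<Rightarrow> 'a \<Rightarrow> 'a \<Rightarrow> 'a \<Rightarrow> nat \<Rightarrow> 'a" where
  "pt x0 x1 x2 x3 = (\<lambda>i. if i = 0 then x0 else if i = 1 then x1 else if i = 2 then x2 else x3)"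

end

theory Submission
  imports Defs
begin

(* In characteristic 2 the terms a1 s1^4 and beta s2^2 of F (where s_k = esym4 k x) have
   vanishing partial derivatives, and dF/dx_i at x is G_x(x_i) for one cubic G_x whose
   coefficients are symmetric in x (dF_cubic).  So x is singular iff F(x) = 0 and every
   coordinate of x is a root of G_x; for the listed points this is a direct computation, through
   Vieta's formulas when three coordinates are distinct.  If all four coordinates are distinct,
   G_x vanishes identically, so a4 = 0 and a3 s1 = 0.  If beta = 0 (resp. a3 = 0), all points
   with s1 = s3 = 0 (resp. s1 = s2 = 0) are singular; they contain a curve, contradicting
   normality.  Otherwise s1 = 0, then F(x) = beta s2^2 forces s2 = 0 and the constant term of
   G_x forces s3 = 0, so every coordinate is a root of t^4 + s4, which has only one root in
   characteristic 2. *)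

lemma numeral_Bit0_CHAR_2:
  assumes "CHAR('a::comm_ring_1) = 2"
  shows "(numeral (Num.Bit0 n) :: 'a) = 0"
  using assms of_nat_eq_0_iff_char_dvd[where 'a='a, of "numeral (Num.Bit0 n)"] by simp

lemma numeral_Bit1_CHAR_2:
  assumes "CHAR('a::comm_ring_1) = 2"
  shows "(numeral (Num.Bit1 n) :: 'a) = 1"
proof -
  have "(numeral (Num.Bit1 n) :: 'a) = numeral (Num.Bit0 n) + 1"
    by (simp only: numeral_Bit0 numeral_Bit1)
  then show ?thesis by (simp add: numeral_Bit0_CHAR_2[OF assms])
qed

lemmas CHAR_2_simps = numeral_Bit0_CHAR_2 numeral_Bit1_CHAR_2 uminus_CHAR_2 minus_CHAR_2

lemma add_eq_0_iff_CHAR_2: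
  assumes "CHAR('a::comm_ring_1) = 2"
  shows "(x::'a) + y = 0 \<longleftrightarrow> x = y"
  using minus_CHAR_2[OF assms, of x y] by (metis eq_iff_diff_eq_0)

lemma power4_add_CHAR_2:
  assumes "CHAR('a::comm_ring_1) = 2"
  shows "((x::'a) + y) ^ 4 = x ^ 4 + y ^ 4"
proof -
  have sq: "(u + v) ^ 2 = u ^ 2 + v ^ 2" for u v :: 'a
    by (simp add: power2_sum CHAR_2_simps[OF assms])
  have "(x + y) ^ 4 = ((x + y) ^ 2) ^ 2" by (simp flip: power_mult)
  also have "\<dots> = x ^ 4 + y ^ 4" by (simp add: sq flip: power_mult)
  finally show ?thesis .
qed

lemma all_less_4: "(\<forall>i<4. P i) \<longleftrightarrow> P 0 \<and> P 1 \<and> P 2 \<and> P (3::nat)"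
  by (auto simp: numeral_eq_Suc less_Suc_eq)

lemma ex_less_4: "(\<exists>i<4. P i) \<longleftrightarrow> P 0 \<or> P 1 \<or> P 2 \<or> P (3::nat)"
  by (auto simp: numeral_eq_Suc less_Suc_eq)

lemma pt_simps [simp]:
  "pt x0 x1 x2 x3 0 = x0" "pt x0 x1 x2 x3 (Suc 0) = x1" "pt x0 x1 x2 x3 2 = x2" "pt x0 x1 x2 x3 3 = x3"
  by (simp_all add: pt_def)

lemma esym4_expand:
  "esym4 1 y = y 0 + y 1 + y 2 + y 3"
  "esym4 2 y = y 0 * y 1 + y 0 * y 2 + y 0 * y 3 + y 1 * y 2 + y 1 * y 3 + y 2 * y 3"
  "esym4 3 y = y 0 * y 1 * y 2 + y 0 * y 1 * y 3 + y 0 * y 2 * y 3 + y 1 * y 2 * y 3"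
  "esym4 4 y = y 0 * y 1 * y 2 * y 3"
proof -
  have "{0..<4::nat} = {0, 1, 2, 3}" by auto
  then have Pow_4: "Pow {0..<4::nat} = {{0,1,2,3}, {0,1,2}, {0,1,3}, {0,1}, {0,2,3}, {0,2}, {0,3}, {0},
      {1,2,3}, {1,2}, {1,3}, {1}, {2,3}, {2}, {3}, {}}"
    by (simp add: Pow_insert insert_commute)
  show "esym4 1 y = y 0 + y 1 + y 2 + y 3"
    "esym4 2 y = y 0 * y 1 + y 0 * y 2 + y 0 * y 3 + y 1 * y 2 + y 1 * y 3 + y 2 * y 3"
    "esym4 3 y = y 0 * y 1 * y 2 + y 0 * y 1 * y 3 + y 0 * y 2 * y 3 + y 1 * y 2 * y 3"
    "esym4 4 y = y 0 * y 1 * y 2 * y 3"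
    unfolding esym4_def Collect_conj_eq Collect_subset Pow_def[symmetric] Pow_4
    by (simp_all add: Int_insert_left set_eq_subset algebra_simps)
qed

lemma esym4_vieta:
  assumes "i < 4"
  shows "y i ^ 4 - esym4 1 y * y i ^ 3 + esym4 2 y * y i ^ 2 - esym4 3 y * y i + esym4 4 y = 0"
  using assms unfolding esym4_expand
  by (auto simp: less_Suc_eq numeral_eq_Suc algebra_simps power2_eq_square power3_eq_cube power4_eq_xxxx)

lemma eq_if_esym1_esym2_esym3_eq_0_CHAR_2:
  fixes x :: "nat \<Rightarrow> 'a::field"
  assumes "CHAR('a) = 2" and "esym4 1 x = 0" "esym4 2 x = 0" "esym4 3 x = 0" and "i < 4" "j < 4"
  shows "x i = x j"
proof -
  have "x i ^ 4 = x j ^ 4"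
    using esym4_vieta[OF assms(5), of x] esym4_vieta[OF assms(6), of x] assms(2-4)
    by (simp add: CHAR_2_simps[OF assms(1)] add_eq_0_iff_CHAR_2[OF assms(1)])
  then have "(x i + x j) ^ 4 = 0"
    by (simp only: power4_add_CHAR_2[OF assms(1)] add_eq_0_iff_CHAR_2[OF assms(1)])
  then show ?thesis
    by (simp add: add_eq_0_iff_CHAR_2[OF assms(1)])
qed

lemma poly_eq_0_if_roots:
  fixes p :: "'a::idom poly"
  assumes "degree p < card A" and "\<And>r. r \<in> A \<Longrightarrow> poly p r = 0"
  shows "p = 0"
proof (rule ccontr)
  assume "p \<noteq> 0"
  have "card A \<le> card {r. poly p r = 0}"
    using assms(2) poly_roots_finite[OF \<open>p \<noteq> 0\<close>] by (intro card_mono) auto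
  also have "\<dots> \<le> degree p"
    using card_poly_roots_bound[OF \<open>p \<noteq> 0\<close>] .
  finally show False using assms(1) by simp
qed

lemma cubic_roots_iff_vieta:
  fixes c0 c1 c2 c3 :: "'a::idom"
  assumes "distinct [r1, r2, r3]"
  shows "(\<forall>r\<in>{r1, r2, r3}. poly [:c0, c1, c2, c3:] r = 0) \<longleftrightarrow>
    c2 = - c3 * (r1 + r2 + r3) \<and> c1 = c3 * (r1 * r2 + r1 * r3 + r2 * r3) \<and> c0 = - c3 * r1 * r2 * r3"
    (is "?roots \<longleftrightarrow> ?vieta")
proof
  define q where "q = [:c0 + c3 * r1 * r2 * r3, c1 - c3 * (r1 * r2 + r1 * r3 + r2 * r3), c2 + c3 * (r1 + r2 + r3):]"
  have q_eval: "poly q r = poly [:c0, c1, c2, c3:] r - c3 * (r - r1) * (r - r2) * (r - r3)" for r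
    by (simp add: q_def algebra_simps)
  assume ?roots
  then have "poly q r = 0" if "r \<in> {r1, r2, r3}" for r
    using that by (auto simp: q_eval)
  moreover have "degree q < card {r1, r2, r3}"
    using assms degree_pCons_le[of _ "[:_, _:]"] by (simp add: q_def)
  ultimately have "q = 0"
    by (intro poly_eq_0_if_roots)
  then show ?vieta
    by (simp add: q_def algebra_simps eq_neg_iff_add_eq_0)
next
  assume ?vieta
  then have c2: "c2 = - c3 * (r1 + r2 + r3)" and c1: "c1 = c3 * (r1 * r2 + r1 * r3 + r2 * r3)"
    and c0: "c0 = - c3 * r1 * r2 * r3"
    by blast+
  have "poly [:c0, c1, c2, c3:] r = c3 * (r - r1) * (r - r2) * (r - r3)" for r
    by (simp add: c0 c1 c2 algebra_simps)
  then show ?roots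
    by simp
qed

lemma alg_closed_infinite_UNIV:
  assumes "alg_closed TYPE('a::field)"
  shows "infinite (UNIV :: 'a set)"
proof
  assume fin: "finite (UNIV :: 'a set)"
  define p :: "'a poly" where "p = (\<Prod>a\<in>UNIV. [:- a, 1:])"
  have "degree p = card (UNIV :: 'a set)"
    unfolding p_def by (subst degree_prod_eq_sum_degree) auto
  with fin have "0 < degree (p + 1)"
    by (simp add: finite_UNIV_card_ge_0 degree_add_eq_left)
  then obtain x where "poly (p + 1) x = 0"
    using assms unfolding alg_closed_def by blast
  moreover have "poly p x = 0"
    using fin by (simp add: p_def poly_prod prod_zero_iff)
  ultimately show False by simp
qed

lemma poly_esym4: "poly (esym4 k Y) a = esym4 k (\<lambda>j. poly (Y j) a)"
  by (simp add: esym4_def poly_sum poly_prod)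

definition coord_line :: "nat \<Rightarrow> (nat \<Rightarrow> 'a::comm_ring_1) \<Rightarrow> nat \<Rightarrow> 'a poly" where
  "coord_line i x = (\<lambda>j. if j = i then [:0, 1:] else [:x j:])"

lemma poly_coord_line: "poly (coord_line i x j) (x i) = x j"
  by (simp add: coord_line_def)

lemma poly_pderiv_coord_line: "poly (pderiv (coord_line i x j)) a = (if j = i then 1 else 0)"
  by (simp add: coord_line_def pderiv_pCons)

lemma poly_pderiv_esym4_coord_line:
  fixes x :: "nat \<Rightarrow> 'a::idom"
  assumes "i < 4"
  shows "poly (pderiv (esym4 1 (coord_line i x))) (x i) = 1"
    and "poly (pderiv (esym4 2 (coord_line i x))) (x i) = esym4 1 x - x i"
    and "poly (pderiv (esym4 3 (coord_line i x))) (x i) = esym4 2 x - x i * esym4 1 x + x i ^ 2"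
    and "poly (pderiv (esym4 4 (coord_line i x))) (x i) =
      esym4 3 x - x i * esym4 2 x + x i ^ 2 * esym4 1 x - x i ^ 3"
  using assms unfolding esym4_expand
  by (auto simp: pderiv_add pderiv_mult poly_coord_line poly_pderiv_coord_line less_Suc_eq numeral_eq_Suc
      algebra_simps power2_eq_square power3_eq_cube)

lemma dF_esym4:
  fixes x :: "nat \<Rightarrow> 'a::field"
  assumes "i < 4"
  shows "dF a1 a2 a3 a4 \<beta> i x =
    4 * a1 * esym4 1 x ^ 3
    + a2 * (2 * esym4 1 x * esym4 2 x + esym4 1 x ^ 2 * (esym4 1 x - x i))
    + a3 * (esym4 3 x + esym4 1 x * (esym4 2 x - x i * esym4 1 x + x i ^ 2))
    + a4 * (esym4 3 x - x i * esym4 2 x + x i ^ 2 * esym4 1 x - x i ^ 3)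
    + 2 * \<beta> * esym4 2 x * (esym4 1 x - x i)"
  unfolding dF_def coord_line_def[symmetric] symq_def
  by (simp only: pderiv_add pderiv_mult pderiv_power poly_add poly_mult poly_smult poly_power
      poly_esym4 poly_coord_line poly_pderiv_esym4_coord_line[OF assms])
    (simp add: pderiv_pCons algebra_simps power2_eq_square power3_eq_cube)

definition dF_cubic :: "'a::comm_ring_1 \<Rightarrow> 'a \<Rightarrow> 'a \<Rightarrow> (nat \<Rightarrow> 'a) \<Rightarrow> 'a poly" where
  "dF_cubic a2 a3 a4 x =
     [:a2 * esym4 1 x ^ 3 + a3 * esym4 1 x * esym4 2 x + (a3 + a4) * esym4 3 x,
       (a2 + a3) * esym4 1 x ^ 2 + a4 * esym4 2 x, (a3 + a4) * esym4 1 x, a4:]"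

lemma degree_dF_cubic: "degree (dF_cubic a2 a3 a4 x) \<le> 3"
  unfolding dF_cubic_def by (rule degree_le) (simp add: coeff_pCons split: nat.split)

lemma dF_CHAR_2:
  fixes x :: "nat \<Rightarrow> 'a::field"
  assumes "CHAR('a) = 2" and "i < 4"
  shows "dF a1 a2 a3 a4 \<beta> i x = poly (dF_cubic a2 a3 a4 x) (x i)"
  unfolding dF_esym4[OF assms(2)] dF_cubic_def
  by (simp add: CHAR_2_simps[OF assms(1)] algebra_simps power2_eq_square power3_eq_cube)

lemma F_esym4:
  "F a1 a2 a3 a4 \<beta> x = a1 * esym4 1 x ^ 4 + a2 * esym4 1 x ^ 2 * esym4 2 x + a3 * esym4 1 x * esym4 3 x
    + a4 * esym4 4 x + \<beta> * esym4 2 x ^ 2"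
  by (simp add: F_def symq_def)

lemma sing_pt_iff_CHAR_2:
  fixes x :: "nat \<Rightarrow> 'a::field"
  assumes "CHAR('a) = 2"
  shows "sing_pt a1 a2 a3 a4 \<beta> x \<longleftrightarrow>
    (\<exists>i<4. x i \<noteq> 0) \<and> F a1 a2 a3 a4 \<beta> x = 0 \<and> (\<forall>i<4. poly (dF_cubic a2 a3 a4 x) (x i) = 0)"
  by (simp add: sing_pt_def dF_CHAR_2[OF assms])

lemma sing_pt_if_esym1_esym3_eq_0:
  fixes x :: "nat \<Rightarrow> 'a::field"
  assumes "CHAR('a) = 2" and "a4 = 0" "\<beta> = 0" and "\<exists>i<4. x i \<noteq> 0"
    and "esym4 1 x = 0" "esym4 3 x = 0"
  shows "sing_pt a1 a2 a3 a4 \<beta> x"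
  using assms by (simp add: sing_pt_iff_CHAR_2 F_esym4 dF_cubic_def)

lemma sing_pt_if_esym1_esym2_eq_0:
  fixes x :: "nat \<Rightarrow> 'a::field"
  assumes "CHAR('a) = 2" and "a3 = 0" "a4 = 0" and "\<exists>i<4. x i \<noteq> 0"
    and "esym4 1 x = 0" "esym4 2 x = 0"
  shows "sing_pt a1 a2 a3 a4 \<beta> x"
  using assms by (simp add: sing_pt_iff_CHAR_2 F_esym4 dF_cubic_def)

lemma not_normal_quartic_if_sing_curve:
  fixes f :: "'a::field \<Rightarrow> nat \<Rightarrow> 'a"
  assumes "infinite (UNIV :: 'a set)" and sing: "\<And>u. sing_pt a1 a2 a3 a4 \<beta> (f u)"
    and f1: "\<And>u. f u 1 = 1" and f2: "\<And>u. f u 2 = u"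
  shows "\<not> normal_quartic a1 a2 a3 a4 \<beta>"
proof
  assume "normal_quartic a1 a2 a3 a4 \<beta>"
  then obtain P where "finite P" and rep: "\<And>u. \<exists>p\<in>P. \<exists>t. \<forall>i<4. f u i = t * p i"
    unfolding normal_quartic_def using sing by blast
  then obtain g where gP: "\<And>u. g u \<in> P" and g: "\<And>u. \<exists>t. \<forall>i<4. f u i = t * g u i"
    by metis
  have "inj g" \<comment> \<open>\<open>f u 1 = 1\<close> fixes the scalar, so \<open>f u 2 = u\<close> separates the points\<close>
  proof (rule injI)
    fix u v assume guv: "g u = g v"
    obtain s where s: "\<forall>i<4. f u i = s * g u i" using g by blast
    obtain t where t: "\<forall>i<4. f v i = t * g v i" using g by blast
    have "s * g u 1 = 1" "s * g u 2 = u"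
      using s[rule_format, of 1] s[rule_format, of 2] f1[of u] f2[of u] by simp_all
    moreover have "t * g u 1 = 1" "t * g u 2 = v"
      using t[rule_format, of 1] t[rule_format, of 2] f1[of v] f2[of v] guv by simp_all
    ultimately show "u = v"
      by (metis mult_cancel_right mult_zero_left zero_neq_one)
  qed
  then have "finite (UNIV :: 'a set)"
    using \<open>finite P\<close> gP by (metis finite_imageD finite_subset image_subsetI)
  with assms(1) show False by simp
qed

lemma not_normal_quartic_if_a4_beta_eq_0:
  assumes "CHAR('a::field) = 2" and "infinite (UNIV :: 'a set)" and "a4 = 0" "\<beta> = (0::'a)"
  shows "\<not> normal_quartic a1 a2 a3 a4 \<beta>"
proof (rule not_normal_quartic_if_sing_curve[OF assms(2), where f = "\<lambda>u. pt 1 1 u u"])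
  fix u :: 'a
  have "esym4 1 (pt 1 1 u u) = 0" "esym4 3 (pt 1 1 u u) = 0"
    unfolding esym4_expand by (simp_all add: CHAR_2_simps[OF assms(1)] algebra_simps)
  then show "sing_pt a1 a2 a3 a4 \<beta> (pt 1 1 u u)"
    using assms by (intro sing_pt_if_esym1_esym3_eq_0) (auto simp: ex_less_4)
qed simp_all

lemma not_normal_quartic_if_a3_a4_eq_0:
  assumes "CHAR('a::field) = 2" and "alg_closed TYPE('a)" and "a3 = 0" "a4 = (0::'a)"
  shows "\<not> normal_quartic a1 a2 a3 a4 \<beta>"
proof -
  obtain w :: 'a where w: "poly [:1, 1, 1:] w = 0"
    using assms(2) unfolding alg_closed_def by (metis degree_pCons_eq_if zero_less_Suc one_neq_zero pCons_eq_0_iff)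
  then have w: "w ^ 2 + w + 1 = 0"
    by (simp add: algebra_simps power2_eq_square)
  let ?f = "\<lambda>u. pt (w + (w + 1) * u) 1 u (w + 1 + w * u)"
  have "esym4 1 (?f u) = 0" for u
    unfolding esym4_expand by (simp add: CHAR_2_simps[OF assms(1)] algebra_simps)
  moreover have "esym4 2 (?f u) = (w ^ 2 + w + 1) * (1 + u ^ 2)" for u
    unfolding esym4_expand by (simp add: CHAR_2_simps[OF assms(1)] algebra_simps power2_eq_square)
  ultimately have "sing_pt a1 a2 a3 a4 \<beta> (?f u)" for u
    using assms w by (intro sing_pt_if_esym1_esym2_eq_0) (auto simp: ex_less_4)
  then show ?thesis
    by (rule not_normal_quartic_if_sing_curve[OF alg_closed_infinite_UNIV[OF assms(2)]]) simp_all
qed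

lemma sing_pt_coords_not_distinct:
  fixes x :: "nat \<Rightarrow> 'a::field"
  assumes char: "CHAR('a) = 2" and K: "alg_closed TYPE('a)"
    and normal: "normal_quartic a1 a2 a3 a4 \<beta>" and sing: "sing_pt a1 a2 a3 a4 \<beta> x"
  shows "\<not> (\<forall>i<4. \<forall>j<4. i \<noteq> j \<longrightarrow> x i \<noteq> x j)"
proof
  assume distinct: "\<forall>i<4. \<forall>j<4. i \<noteq> j \<longrightarrow> x i \<noteq> x j"
  then have "inj_on x {0..<4}"
    by (intro inj_onI) (metis atLeastLessThan_iff)
  then have "degree (dF_cubic a2 a3 a4 x) < card (x ` {0..<4})"
    using degree_dF_cubic[of a2 a3 a4 x] by (simp add: card_image)
  moreover have "poly (dF_cubic a2 a3 a4 x) r = 0" if "r \<in> x ` {0..<4}" for r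
    using sing that by (auto simp: sing_pt_iff_CHAR_2[OF char] F_esym4)
  ultimately have "dF_cubic a2 a3 a4 x = 0"
    by (rule poly_eq_0_if_roots)
  then have a4: "a4 = 0" and a3_s1: "a3 * esym4 1 x = 0"
    and c0: "a2 * esym4 1 x ^ 3 + a3 * esym4 1 x * esym4 2 x + a3 * esym4 3 x = 0"
    by (auto simp: dF_cubic_def)
  have "\<beta> \<noteq> 0"
    using not_normal_quartic_if_a4_beta_eq_0[OF char alg_closed_infinite_UNIV[OF K] a4] normal by blast
  moreover have "a3 \<noteq> 0"
    using not_normal_quartic_if_a3_a4_eq_0[OF char K _ a4] normal by blast
  ultimately have s1: "esym4 1 x = 0" and "\<beta> * esym4 2 x ^ 2 = 0"
    using a3_s1 sing a4 by (auto simp: sing_pt_iff_CHAR_2[OF char] F_esym4)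
  with \<open>\<beta> \<noteq> 0\<close> have s2: "esym4 2 x = 0"
    by simp
  with s1 c0 \<open>a3 \<noteq> 0\<close> have s3: "esym4 3 x = 0"
    by simp
  have "x 0 = x 1"
    using eq_if_esym1_esym2_esym3_eq_0_CHAR_2[OF char s1 s2 s3] by simp
  with distinct show False
    by auto
qed

context
  fixes a1 a2 a3 a4 \<beta> :: "'a::field"
  assumes char: "CHAR('a) = 2"
begin

lemma sing_pt_0011_iff: "sing_pt a1 a2 a3 a4 \<beta> (pt 0 0 1 1) \<longleftrightarrow> \<beta> = 0"
proof -
  have "esym4 1 (pt 0 0 1 1) = (0::'a)" "esym4 2 (pt 0 0 1 1) = (1::'a)"
    "esym4 3 (pt 0 0 1 1) = (0::'a)" "esym4 4 (pt 0 0 1 1) = (0::'a)"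
    unfolding esym4_expand by (simp_all add: CHAR_2_simps[OF char])
  then show ?thesis
    by (simp add: sing_pt_iff_CHAR_2[OF char] F_esym4 dF_cubic_def all_less_4 ex_less_4
        CHAR_2_simps[OF char])
qed

lemma sing_pt_0001_iff: "sing_pt a1 a2 a3 a4 \<beta> (pt 0 0 0 1) \<longleftrightarrow> a1 = 0 \<and> a2 = 0"
proof -
  have "esym4 1 (pt 0 0 0 1) = (1::'a)" "esym4 2 (pt 0 0 0 1) = (0::'a)"
    "esym4 3 (pt 0 0 0 1) = (0::'a)" "esym4 4 (pt 0 0 0 1) = (0::'a)"
    unfolding esym4_expand by simp_all
  then show ?thesis
    by (auto simp: sing_pt_iff_CHAR_2[OF char] F_esym4 dF_cubic_def all_less_4 ex_less_4
        CHAR_2_simps[OF char])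
qed

lemma sing_pt_1111_iff: "sing_pt a1 a2 a3 a4 \<beta> (pt 1 1 1 1) \<longleftrightarrow> a4 = 0"
proof -
  have "esym4 1 (pt 1 1 1 1) = (0::'a)" "esym4 2 (pt 1 1 1 1) = (0::'a)"
    "esym4 3 (pt 1 1 1 1) = (0::'a)" "esym4 4 (pt 1 1 1 1) = (1::'a)"
    unfolding esym4_expand by (simp_all add: CHAR_2_simps[OF char])
  then show ?thesis
    by (simp add: sing_pt_iff_CHAR_2[OF char] F_esym4 dF_cubic_def all_less_4 ex_less_4
        CHAR_2_simps[OF char])
qed

lemma sing_pt_111b_iff:
  assumes "b \<noteq> 1"
  shows "sing_pt a1 a2 a3 a4 \<beta> (pt 1 1 1 b) \<longleftrightarrow>
    a4 = a2 * (1 + b) ^ 2 \<and> \<beta> = a1 * (1 + b) ^ 2 + a2 + a3"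
proof -
  note char2 = CHAR_2_simps[OF char]
  have s: "esym4 1 (pt 1 1 1 b) = 1 + b" "esym4 2 (pt 1 1 1 b) = 1 + b"
    "esym4 3 (pt 1 1 1 b) = 1 + b" "esym4 4 (pt 1 1 1 b) = b"
    unfolding esym4_expand by (simp_all add: char2 algebra_simps)
  have "F a1 a2 a3 a4 \<beta> (pt 1 1 1 b) =
      (1 + b) ^ 2 * (a1 * (1 + b) ^ 2 + a2 + a3 + \<beta>) + b * (a4 + a2 * (1 + b) ^ 2)"
    unfolding F_esym4 s by (simp add: char2 algebra_simps power2_eq_square power3_eq_cube power4_eq_xxxx)
  moreover have "poly (dF_cubic a2 a3 a4 (pt 1 1 1 b)) 1 = b * (a4 + a2 * (1 + b) ^ 2)"
    "poly (dF_cubic a2 a3 a4 (pt 1 1 1 b)) b = a4 + a2 * (1 + b) ^ 2"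
    unfolding dF_cubic_def s by (simp_all add: char2 algebra_simps power2_eq_square power3_eq_cube)
  moreover have "1 + b \<noteq> 0"
    using assms by (simp add: add_eq_0_iff_CHAR_2[OF char])
  ultimately have "sing_pt a1 a2 a3 a4 \<beta> (pt 1 1 1 b) \<longleftrightarrow>
      a4 + a2 * (1 + b) ^ 2 = 0 \<and> a1 * (1 + b) ^ 2 + a2 + a3 + \<beta> = 0"
    by (auto simp: sing_pt_iff_CHAR_2[OF char] all_less_4 ex_less_4)
  then show ?thesis
    by (auto simp: add_eq_0_iff_CHAR_2[OF char])
qed

lemma sing_pt_011z_iff:
  assumes "z \<noteq> 0" "z \<noteq> 1"
  shows "sing_pt a1 a2 a3 a4 \<beta> (pt 0 1 1 z) \<longleftrightarrow>
    a3 = z * a2 \<and> a4 = z ^ 2 * a2 \<and> \<beta> = a1 * z ^ 4 + a2 * z ^ 2 * (1 + z)"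
proof -
  note char2 = CHAR_2_simps[OF char]
  have s: "esym4 1 (pt 0 1 1 z) = z" "esym4 2 (pt 0 1 1 z) = 1"
    "esym4 3 (pt 0 1 1 z) = z" "esym4 4 (pt 0 1 1 z) = 0"
    unfolding esym4_expand by (simp_all add: char2)
  have "F a1 a2 a3 a4 \<beta> (pt 0 1 1 z) = (a1 * z ^ 4 + a2 * z ^ 2 + a3 * z ^ 2) + \<beta>"
    unfolding F_esym4 s by (simp add: power2_eq_square)
  moreover have "poly (dF_cubic a2 a3 a4 (pt 0 1 1 z)) 0 = z * (z ^ 2 * a2 + a4)"
    "poly (dF_cubic a2 a3 a4 (pt 0 1 1 z)) 1 = z * (1 + z) * (z * a2 + a3)"
    "poly (dF_cubic a2 a3 a4 (pt 0 1 1 z)) z = 0"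
    unfolding dF_cubic_def s by (simp_all add: char2 algebra_simps power2_eq_square power3_eq_cube)
  moreover have "z * (1 + z) \<noteq> 0"
    using assms by (simp add: add_eq_0_iff_CHAR_2[OF char])
  ultimately have "sing_pt a1 a2 a3 a4 \<beta> (pt 0 1 1 z) \<longleftrightarrow>
      z ^ 2 * a2 + a4 = 0 \<and> z * a2 + a3 = 0 \<and> a1 * z ^ 4 + a2 * z ^ 2 + a3 * z ^ 2 + \<beta> = 0"
    using assms by (auto simp: sing_pt_iff_CHAR_2[OF char] all_less_4 ex_less_4)
  then show ?thesis
    by (auto simp: add_eq_0_iff_CHAR_2[OF char] algebra_simps power2_eq_square)
qed

lemma sing_pt_001b_iff:
  assumes "b \<noteq> 0" "b \<noteq> 1"
  shows "sing_pt a1 a2 a3 a4 \<beta> (pt 0 0 1 b) \<longleftrightarrow>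
    a2 = 0 \<and> a3 = 0 \<and> a1 * (1 + b) ^ 4 + \<beta> * b ^ 2 = 0"
proof -
  note char2 = CHAR_2_simps[OF char]
  have s: "esym4 1 (pt 0 0 1 b) = 1 + b" "esym4 2 (pt 0 0 1 b) = b"
    "esym4 3 (pt 0 0 1 b) = 0" "esym4 4 (pt 0 0 1 b) = 0"
    unfolding esym4_expand by (simp_all add: char2)
  have G: "dF_cubic a2 a3 a4 (pt 0 0 1 b) =
      [:a2 * (1 + b) ^ 3 + a3 * (1 + b) * b, (a2 + a3) * (1 + b) ^ 2 + a4 * b, (a3 + a4) * (1 + b), a4:]"
    unfolding dF_cubic_def s by simp
  have "1 + b \<noteq> 0"
    using assms by (simp add: add_eq_0_iff_CHAR_2[OF char])
  have roots: "distinct [0, 1, b]"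
    using assms by simp
  have "sing_pt a1 a2 a3 a4 \<beta> (pt 0 0 1 b) \<longleftrightarrow>
      F a1 a2 a3 a4 \<beta> (pt 0 0 1 b) = 0 \<and> (\<forall>r\<in>{0, 1, b}. poly (dF_cubic a2 a3 a4 (pt 0 0 1 b)) r = 0)"
    by (auto simp: sing_pt_iff_CHAR_2[OF char] all_less_4 ex_less_4)
  also have "(\<forall>r\<in>{0, 1, b}. poly (dF_cubic a2 a3 a4 (pt 0 0 1 b)) r = 0) \<longleftrightarrow> a2 = 0 \<and> a3 = 0"
    unfolding G cubic_roots_iff_vieta[OF roots] using assms \<open>1 + b \<noteq> 0\<close>
    by (auto simp: char2)
  also have "F a1 a2 a3 a4 \<beta> (pt 0 0 1 b) = a1 * (1 + b) ^ 4 + a2 * (1 + b) ^ 2 * b + \<beta> * b ^ 2"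
    unfolding F_esym4 s by simp
  finally show ?thesis
    by auto
qed

lemma esym4_pt_11bc:
  fixes b c :: 'a
  shows "esym4 1 (pt 1 1 b c) = b + c" "esym4 2 (pt 1 1 b c) = 1 + b * c"
    "esym4 3 (pt 1 1 b c) = b + c" "esym4 4 (pt 1 1 b c) = b * c"
  unfolding esym4_expand by (simp_all add: CHAR_2_simps[OF char] algebra_simps)

lemma dF_cubic_pt_11bc_roots_iff:
  assumes "b \<notin> {0, 1}" "c \<notin> {0, 1}" "b \<noteq> c" and z: "z = b + c"
  shows "(\<forall>r\<in>{1, b, c}. poly (dF_cubic a2 a3 a4 (pt 1 1 b c)) r = 0) \<longleftrightarrow>
    a3 = z * a2 \<and> a4 = z ^ 2 * a2"
proof -
  note char2 = CHAR_2_simps[OF char]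
  have "z \<noteq> 0"
    using assms by (simp add: add_eq_0_iff_CHAR_2[OF char])
  have roots: "distinct [1, b, c]"
    using assms by auto
  have G: "dF_cubic a2 a3 a4 (pt 1 1 b c) =
      [:a2 * z ^ 3 + a3 * z * (1 + b * c) + (a3 + a4) * z, (a2 + a3) * z ^ 2 + a4 * (1 + b * c),
        (a3 + a4) * z, a4:]"
    unfolding dF_cubic_def esym4_pt_11bc z ..
  show ?thesis
    unfolding G cubic_roots_iff_vieta[OF roots]
  proof (intro iffI; elim conjE)
    assume V2: "(a3 + a4) * z = - a4 * (1 + b + c)"
      and V1: "(a2 + a3) * z ^ 2 + a4 * (1 + b * c) = a4 * (1 * b + 1 * c + b * c)"
    have "a3 * z + a4 * z = a4 + a4 * z"
      using V2 by (simp add: z char2 algebra_simps)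
    then have a4: "a4 = a3 * z"
      by simp
    have "a2 * z ^ 2 + a3 * z ^ 2 + a3 * z = a3 * z * z"
      using V1 unfolding a4 by (simp add: z char2 algebra_simps)
    then have "z * (a2 * z + a3) = 0"
      by (simp add: char2 algebra_simps power2_eq_square)
    then have "a3 = z * a2"
      using \<open>z \<noteq> 0\<close> by (simp add: add_eq_0_iff_CHAR_2[OF char] mult.commute)
    with a4 show "a3 = z * a2 \<and> a4 = z ^ 2 * a2"
      by (simp add: power2_eq_square)
  next
    assume "a3 = z * a2" "a4 = z ^ 2 * a2"
    then show "(a3 + a4) * z = - a4 * (1 + b + c) \<and>
      (a2 + a3) * z ^ 2 + a4 * (1 + b * c) = a4 * (1 * b + 1 * c + b * c) \<and>
      a2 * z ^ 3 + a3 * z * (1 + b * c) + (a3 + a4) * z = - a4 * 1 * b * c"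
      by (simp add: z char2 algebra_simps power2_eq_square power3_eq_cube)
  qed
qed

lemma sing_pt_11bc_iff:
  assumes "b \<notin> {0, 1}" "c \<notin> {0, 1}" "b \<noteq> c" and z: "z = b + c"
  shows "sing_pt a1 a2 a3 a4 \<beta> (pt 1 1 b c) \<longleftrightarrow>
    a3 = z * a2 \<and> a4 = z ^ 2 * a2 \<and> \<beta> * (1 + b * c) ^ 2 + a1 * z ^ 4 + a2 * z ^ 2 * (1 + z) = 0"
proof -
  have "sing_pt a1 a2 a3 a4 \<beta> (pt 1 1 b c) \<longleftrightarrow>
      F a1 a2 a3 a4 \<beta> (pt 1 1 b c) = 0 \<and> (\<forall>r\<in>{1, b, c}. poly (dF_cubic a2 a3 a4 (pt 1 1 b c)) r = 0)"
    by (auto simp: sing_pt_iff_CHAR_2[OF char] all_less_4 ex_less_4)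
  moreover have "F a1 a2 a3 a4 \<beta> (pt 1 1 b c) = \<beta> * (1 + b * c) ^ 2 + a1 * z ^ 4 + a2 * z ^ 2 * (1 + z)"
    if "a3 = z * a2" "a4 = z ^ 2 * a2"
    unfolding F_esym4 esym4_pt_11bc z[symmetric] that
    by (simp add: CHAR_2_simps[OF char] algebra_simps power2_eq_square power3_eq_cube)
  ultimately show ?thesis
    using dF_cubic_pt_11bc_roots_iff[OF assms] by force
qed

end

theorem proposition4p2:
  fixes a1 a2 a3 a4 \<beta> :: "'a::field"
  assumes K: "alg_closed TYPE('a)" and char2: "CHAR('a) = 2"
    and normal: "normal_quartic a1 a2 a3 a4 \<beta>"
  shows "(\<forall>x. sing_pt a1 a2 a3 a4 \<beta> x \<longrightarrow>
            \<not> (\<forall>i<4. \<forall>j<4. i \<noteq> j \<longrightarrow> x i \<noteq> x j))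
    \<and> (sing_pt a1 a2 a3 a4 \<beta> (pt 0 0 1 1) \<longleftrightarrow> \<beta> = 0)
    \<and> (sing_pt a1 a2 a3 a4 \<beta> (pt 0 0 0 1) \<longleftrightarrow> a1 = 0 \<and> a2 = 0)
    \<and> (\<forall>b. b \<noteq> 1 \<longrightarrow> (sing_pt a1 a2 a3 a4 \<beta> (pt 1 1 1 b) \<longleftrightarrow>
            a4 = a2 * (1 + b)^2 \<and> \<beta> = a1 * (1 + b)^2 + a2 + a3))
    \<and> (sing_pt a1 a2 a3 a4 \<beta> (pt 1 1 1 1) \<longleftrightarrow> a4 = 0)
    \<and> (\<forall>b. b \<noteq> 0 \<and> b \<noteq> 1 \<longrightarrow> (sing_pt a1 a2 a3 a4 \<beta> (pt 0 0 1 b) \<longleftrightarrow>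
            a2 = 0 \<and> a3 = 0 \<and> a1 * (1 + b)^4 + \<beta> * b^2 = 0))
    \<and> (\<forall>z. z \<noteq> 0 \<and> z \<noteq> 1 \<longrightarrow> (sing_pt a1 a2 a3 a4 \<beta> (pt 0 1 1 z) \<longleftrightarrow>
            a3 = z * a2 \<and> a4 = z^2 * a2 \<and> \<beta> = a1 * z^4 + a2 * z^2 * (1 + z)))
    \<and> (\<forall>b c. b \<notin> {0, 1} \<and> c \<notin> {0, 1} \<and> b \<noteq> c \<longrightarrow>
           (let z = b + c in
            sing_pt a1 a2 a3 a4 \<beta> (pt 1 1 b c) \<longleftrightarrow>
            a3 = z * a2 \<and> a4 = z^2 * a2 \<and>
            \<beta> * (1 + b * c)^2 + a1 * z^4 + a2 * z^2 * (1 + z) = 0))"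
  unfolding Let_def
  using sing_pt_coords_not_distinct[OF char2 K normal]
  by (simp add: sing_pt_0011_iff[OF char2] sing_pt_0001_iff[OF char2] sing_pt_111b_iff[OF char2]
      sing_pt_1111_iff[OF char2] sing_pt_001b_iff[OF char2] sing_pt_011z_iff[OF char2]
      sing_pt_11bc_iff[OF char2 _ _ _ refl])

end
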